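(* There exist infinitely many circles $(x-h)^2+y^2=a^2$ with $h,a\in\mathbb{Q}$, $a>0$, for which the ratios $h/a$ are pairwise distinct, such that each of them carries four rational points $(x_i,y_i)$, $i=1,\dots,4$, with $x_{i+1}=\tfrac{5}{3}x_i$ for $i=1,2,3$, whose fourth point is $(x_4,y_4)=(h+a,0)$ and whose first point $(x_1,y_1)$ does not lie on the $x$-axis.
   Context: Rational points are points with both coordinates in $\mathbb{Q}$. *)

theory Defs
  imports Complex_Main
begin

definition on_circle :: "rat \<Rightarrow> rat \<Rightarrow> rat \<times> rat \<Rightarrow> bool" where
  "on_circle h a p \<longleftrightarrow> (fst p - h)^2 + (snd p)^2 = a^2"

end

theory Submission
  imports Defs
begin

text \<open>
  A circle through \<open>(125, 0) = (h + a, 0)\<close> is determined by the other end \<open>L = h - a\<close> of its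
  horizontal diameter, and a point with abscissa \<open>x\<close> lies on it iff \<open>y\<^sup>2 = (125 - x) (x - L)\<close>.
  For the abscissae 27, 45, 75 this asks \<open>27 - L\<close>, \<open>45 - L\<close>, \<open>75 - L\<close> to lie in the square
  classes of 2, 5, 2. With \<open>X = -20 L\<close> these say that \<open>X + 540\<close>, \<open>X + 900\<close>, \<open>X + 1500\<close> lie in
  the classes of 10, 1, 10, which holds for the abscissae of the points of the curve
  \<open>E: Y\<^sup>2 = (X + 540) (X + 900) (X + 1500)\<close> in the coset \<open>T + 2E(\<rat>)\<close>, \<open>T = (-500, 4000)\<close>:
  the tangent at \<open>P\<close> shows that \<open>X(2P) + e\<close> is a square, and the chord through \<open>T\<close> and \<open>Q\<close>
  shows that \<open>(X(T + Q) + e) (X(T) + e) (X(Q) + e)\<close> is a square. We take \<open>T + 2\<^sup>n\<^sup>+\<^sup>1 P\<^sub>0\<close>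
  with \<open>P\<^sub>0 = (1309, -107113)\<close>. Writing \<open>2\<^sup>n P\<^sub>0 = (A/D\<^sup>2, B/D\<^sup>3)\<close> with \<open>A, B\<close> odd and
  \<open>D = 2\<^sup>n \<cdot> odd\<close>, the 2-adic valuation of \<open>25 - L\<close> is \<open>n + 5\<close>, so the values of \<open>L\<close> are pairwise
  distinct and differ from 27, which keeps the first point off the axis.
\<close>

lemma tangent_line_cubic_identity:
  fixes a b c x y l t :: "'a::field"
  assumes "y^2 = x^3 + a*x^2 + b*x + c" and "2*y*l = 3*x^2 + 2*a*x + b"
  shows "t^3 + a*t^2 + b*t + c - (y + l*(t - x))^2 = (t - x)^2 * (t - (l^2 - a - 2*x))"
proof -
  have "(y + l*(t - x))^2 = y^2 + (2*y*l)*(t - x) + l^2*(t - x)^2" by algebra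
  also have "\<dots> = (x^3 + a*x^2 + b*x + c) + (3*x^2 + 2*a*x + b)*(t - x) + l^2*(t - x)^2"
    using assms by simp
  finally show ?thesis by algebra
qed

lemma chord_line_cubic_identity:
  fixes a b c x1 y1 x2 y2 l t :: "'a::field"
  assumes on1: "y1^2 = x1^3 + a*x1^2 + b*x1 + c" and on2: "y2^2 = x2^3 + a*x2^2 + b*x2 + c"
    and line: "y2 = y1 + l*(x2 - x1)" and "x1 \<noteq> x2"
  shows "t^3 + a*t^2 + b*t + c - (y1 + l*(t - x1))^2 = (t - x1)*(t - x2)*(t - (l^2 - a - x1 - x2))"
proof -
  define q where "q s = s^2 + s*x1 + x1^2 + a*(s + x1) + b - 2*y1*l - l^2*(s - x1)" for s
  have factor: "s^3 + a*s^2 + b*s + c - (y1 + l*(s - x1))^2 = (s - x1) * q s" for s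
    using on1 unfolding q_def by algebra
  have "(x2 - x1) * q x2 = 0" using factor[of x2] on2 line by simp
  then have "q x2 = 0" using \<open>x1 \<noteq> x2\<close> by simp
  then have "q t = (t - x2)*(t - (l^2 - a - x1 - x2))" unfolding q_def by algebra
  then show ?thesis using factor[of t] by simp
qed

lemma tangent_x_sub_root_square:
  fixes a b c x y l r :: "'a::field"
  assumes "y^2 = x^3 + a*x^2 + b*x + c" and "2*y*l = 3*x^2 + 2*a*x + b" and "y \<noteq> 0"
    and root: "r^3 + a*r^2 + b*r + c = 0"
  shows "(l^2 - a - 2*x) - r = ((y + l*(r - x)) / (r - x))^2"
proof -
  have "r \<noteq> x" using assms(1,3) root by auto
  moreover have "(y + l*(r - x))^2 = (r - x)^2 * ((l^2 - a - 2*x) - r)"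
    using tangent_line_cubic_identity[OF assms(1,2), of r] root by algebra
  ultimately show ?thesis by (simp add: power_divide)
qed

lemma chord_x_sub_root:
  fixes a b c x1 y1 x2 y2 l r :: "'a::field"
  assumes "y1^2 = x1^3 + a*x1^2 + b*x1 + c" and "y2^2 = x2^3 + a*x2^2 + b*x2 + c"
    and "y2 = y1 + l*(x2 - x1)" and "x1 \<noteq> x2"
    and root: "r^3 + a*r^2 + b*r + c = 0"
  shows "(x1 - r) * (x2 - r) * ((l^2 - a - x1 - x2) - r) = (y1 + l*(r - x1))^2"
  using chord_line_cubic_identity[OF assms(1-4), of r] root by algebra

definition cubic_E :: "rat \<Rightarrow> rat" where
  "cubic_E t = (t + 540) * (t + 900) * (t + 1500)"

lemma cubic_E_expand: "cubic_E t = t^3 + 2940*t^2 + 2646000*t + 729000000"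
  unfolding cubic_E_def by algebra

definition on_E :: "rat \<times> rat \<Rightarrow> bool" where
  "on_E p \<longleftrightarrow> snd p ^ 2 = cubic_E (fst p)"

definition tangent_slope :: "rat \<times> rat \<Rightarrow> rat" where
  "tangent_slope p = (3 * fst p ^ 2 + 5880 * fst p + 2646000) / (2 * snd p)"

definition dbl_E :: "rat \<times> rat \<Rightarrow> rat \<times> rat" where
  "dbl_E p = (let l = tangent_slope p; x = l^2 - 2940 - 2 * fst p in (x, - (snd p + l * (x - fst p))))"

definition x_add_T :: "rat \<times> rat \<Rightarrow> rat" where
  "x_add_T p = ((snd p - 4000) / (fst p + 500))^2 - 2940 + 500 - fst p"

lemma tangent_slope_eq:
  assumes "snd p \<noteq> 0"
  shows "2 * snd p * tangent_slope p = 3 * fst p ^ 2 + 2 * 2940 * fst p + 2646000"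
  using assms unfolding tangent_slope_def by simp

lemma on_E_dbl_E:
  assumes "on_E p" and "snd p \<noteq> 0"
  shows "on_E (dbl_E p)"
proof -
  define l where "l = tangent_slope p"
  define x' where "x' = l^2 - 2940 - 2 * fst p"
  have curve: "snd p ^ 2 = fst p ^ 3 + 2940 * fst p ^ 2 + 2646000 * fst p + 729000000"
    using assms(1) by (simp add: on_E_def cubic_E_expand)
  have "(snd p + l * (x' - fst p))^2 = cubic_E x'"
    using tangent_line_cubic_identity[OF curve tangent_slope_eq[OF assms(2)], of x']
    unfolding l_def[symmetric] x'_def[symmetric] by (simp add: cubic_E_expand)
  moreover have "dbl_E p = (x', - (snd p + l * (x' - fst p)))"
    by (simp add: dbl_E_def Let_def l_def x'_def)
  ultimately show ?thesis by (simp only: on_E_def fst_conv snd_conv power2_minus)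
qed

lemma cubic_E_root:
  assumes "e \<in> {540, 900, 1500}"
  shows "cubic_E (-e) = 0"
  using assms by (auto simp: cubic_E_def)

lemma fst_plus_root_nonzero:
  assumes "on_E p" and "snd p \<noteq> 0" and "e \<in> {540, 900, 1500}"
  shows "fst p + e \<noteq> 0"
proof
  assume "fst p + e = 0"
  then have "snd p ^ 2 = 0" using assms(1) cubic_E_root[OF assms(3)] by (simp add: on_E_def add_eq_0_iff)
  then show False using assms(2) by simp
qed

lemma fst_dbl_E_plus_root_square:
  assumes "on_E p" and "snd p \<noteq> 0" and "e \<in> {540, 900, 1500}"
  shows "\<exists>r. fst (dbl_E p) + e = r^2"
proof -
  have curve: "snd p ^ 2 = fst p ^ 3 + 2940 * fst p ^ 2 + 2646000 * fst p + 729000000"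
    using assms(1) by (simp add: on_E_def cubic_E_expand)
  have "(-e)^3 + 2940 * (-e)^2 + 2646000 * (-e) + 729000000 = 0"
    using cubic_E_root[OF assms(3)] by (simp add: cubic_E_expand)
  from tangent_x_sub_root_square[OF curve tangent_slope_eq[OF assms(2)] assms(2) this]
  show ?thesis by (auto simp: dbl_E_def Let_def)
qed

lemma x_add_T_plus_root:
  assumes "on_E p" and "fst p \<noteq> -500" and e: "e \<in> {540, 900, 1500}"
    and r: "fst p + e = r^2" "r \<noteq> 0"
  shows "\<exists>q. x_add_T p + e = (e - 500) * q^2"
proof -
  define l where "l = (snd p - 4000) / (fst p + 500)"
  define Y where "Y = 4000 + l * (-e - -500)"
  have "(4000::rat)^2 = (-500)^3 + 2940 * (-500)^2 + 2646000 * (-500) + 729000000" by simp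
  moreover have "snd p ^ 2 = fst p ^ 3 + 2940 * fst p ^ 2 + 2646000 * fst p + 729000000"
    using assms(1) by (simp add: on_E_def cubic_E_expand)
  moreover have "snd p = 4000 + l * (fst p - -500)" using assms(2) by (simp add: l_def)
  moreover have "-500 \<noteq> fst p" using assms(2) by auto
  moreover have "(-e)^3 + 2940 * (-e)^2 + 2646000 * (-e) + 729000000 = 0"
    using cubic_E_root[OF e] by (simp add: cubic_E_expand)
  ultimately have "(-500 - -e) * (fst p - -e) * ((l^2 - 2940 - -500 - fst p) - -e) = Y^2"
    unfolding Y_def by (rule chord_x_sub_root[of 4000 "-500" 2940 2646000 729000000 "snd p" "fst p" l "-e"])
  then have key: "(e - 500) * r^2 * (x_add_T p + e) = Y^2"
    using r(1) by (simp add: x_add_T_def l_def)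
  have "e - 500 \<noteq> 0" using e by auto
  then have "(e - 500) * (Y / ((e - 500) * r))^2 = (e - 500) * r^2 * (x_add_T p + e) / ((e - 500) * r^2)"
    unfolding key by (simp add: power_divide power_mult_distrib power2_eq_square)
  also have "\<dots> = x_add_T p + e" using \<open>e - 500 \<noteq> 0\<close> r(2) by simp
  finally show ?thesis by metis
qed

lemma dbl_E_weighted:
  fixes A B D :: rat
  assumes "D \<noteq> 0" and "B \<noteq> 0" and curve: "on_E (A / D^2, B / D^3)"
  defines "N \<equiv> A^4 - 5292000 * A^2 * D^4 - 5832000000 * A * D^6 - 1571724000000 * D^8"
    and "M \<equiv> 3 * A^2 + 5880 * A * D^2 + 2646000 * D^4"
  shows "dbl_E (A / D^2, B / D^3) = (N / (2*B*D)^2, - (8 * B^4 + M * (N - 4*A*B^2)) / (2*B*D)^3)"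
proof -
  define x y where "x = A / D^2" and "y = B / D^3"
  define l where "l = tangent_slope (x, y)"
  have "y \<noteq> 0" using assms(1,2) by (simp add: y_def)
  have "l^2 - 2940 - 2*x = ((3*x^2 + 5880*x + 2646000)^2 - 4*(2940 + 2*x)*y^2) / (4*y^2)"
    using \<open>y \<noteq> 0\<close> by (simp add: l_def tangent_slope_def power_divide field_simps)
  also have "\<dots> = (x^4 - 5292000*x^2 - 5832000000*x - 1571724000000) / (4*y^2)"
    using curve unfolding x_def[symmetric] y_def[symmetric]
    by (simp add: on_E_def cubic_E_expand algebra_simps power2_eq_square power3_eq_cube power4_eq_xxxx)
  also have "\<dots> = N / (2*B*D)^2"
    using assms(1,2) by (simp add: x_def y_def N_def field_simps)
  finally have fst: "l^2 - 2940 - 2*x = N / (2*B*D)^2" .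
  have snd: "- (y + l * (N / (2*B*D)^2 - x)) = - (8 * B^4 + M * (N - 4*A*B^2)) / (2*B*D)^3"
    using assms(1,2) unfolding l_def tangent_slope_def x_def y_def M_def
    by (simp add: field_simps) algebra
  have "dbl_E (x, y) = (l^2 - 2940 - 2*x, - (y + l * ((l^2 - 2940 - 2*x) - x)))"
    by (simp add: dbl_E_def Let_def l_def)
  also have "\<dots> = (N / (2*B*D)^2, - (8 * B^4 + M * (N - 4*A*B^2)) / (2*B*D)^3)"
    by (simp only: fst snd)
  finally show ?thesis unfolding x_def y_def .
qed

definition two_adic_level :: "nat \<Rightarrow> rat \<times> rat \<Rightarrow> bool" where
  "two_adic_level n p \<longleftrightarrow> (\<exists>A B k :: int. odd A \<and> odd B \<and> odd k \<and>
     p = (of_int A / of_int (2^n * k)^2, of_int B / of_int (2^n * k)^3))"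

lemma two_adic_level_snd_nonzero: "two_adic_level n p \<Longrightarrow> snd p \<noteq> 0"
  unfolding two_adic_level_def by auto

lemma two_adic_level_fst_ne:
  assumes "two_adic_level n p"
  shows "fst p \<noteq> -500"
proof
  obtain A B k :: int where "odd A" "odd k"
    and p: "p = (of_int A / of_int (2^n * k)^2, of_int B / of_int (2^n * k)^3)"
    using assms unfolding two_adic_level_def by blast
  assume "fst p = -500"
  moreover have "(of_int (2^n * k) :: rat) \<noteq> 0" using \<open>odd k\<close> by auto
  ultimately have "(of_int A :: rat) = -500 * of_int (2^n * k)^2"
    by (simp add: p divide_eq_eq del: of_int_mult of_int_power)
  then have "of_int A = (of_int (-500 * (2^n * k)^2) :: rat)" by simp
  then have "A = -500 * (2^n * k)^2" by (simp only: of_int_eq_iff)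
  then show False using \<open>odd A\<close> by simp
qed

lemma two_adic_level_dbl_E:
  assumes "on_E p" and "two_adic_level n p"
  shows "two_adic_level (Suc n) (dbl_E p)"
proof -
  obtain A B k :: int where odd: "odd A" "odd B" "odd k"
    and p: "p = (of_int A / of_int (2^n * k)^2, of_int B / of_int (2^n * k)^3)"
    using assms(2) unfolding two_adic_level_def by blast
  define D where "D = 2^n * k"
  define N where "N = A^4 - 5292000 * A^2 * D^4 - 5832000000 * A * D^6 - 1571724000000 * D^8"
  define M where "M = 3 * A^2 + 5880 * A * D^2 + 2646000 * D^4"
  have "D \<noteq> 0" "B \<noteq> 0" using odd by (auto simp: D_def)
  then have "dbl_E p = (of_int N / of_int (2^Suc n * (B * k))^2,
      of_int (- (8 * B^4 + M * (N - 4*A*B^2))) / of_int (2^Suc n * (B * k))^3)"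
    using dbl_E_weighted[of "of_int D" "of_int B" "of_int A"] assms(1)
    by (simp add: p D_def N_def M_def ac_simps)
  moreover have "odd N" "odd (- (8 * B^4 + M * (N - 4*A*B^2)))" "odd (B * k)"
    using odd by (simp_all add: N_def M_def)
  ultimately show ?thesis unfolding two_adic_level_def by blast
qed

primrec doublings :: "nat \<Rightarrow> rat \<times> rat" where
  "doublings 0 = (1309, -107113)"
| "doublings (Suc n) = dbl_E (doublings n)"

lemma doublings_on_E_level: "on_E (doublings n) \<and> two_adic_level n (doublings n)"
proof (induction n)
  case 0
  have "two_adic_level 0 (1309, -107113)"
    unfolding two_adic_level_def by (rule exI[of _ 1309], rule exI[of _ "-107113"], rule exI[of _ 1]) simp
  then show ?case by (simp add: on_E_def cubic_E_def)
next
  case (Suc n)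
  then have "snd (doublings n) \<noteq> 0" using two_adic_level_snd_nonzero by blast
  with Suc.IH show ?case by (simp add: on_E_dbl_E two_adic_level_dbl_E)
qed

lemma x_add_T_weighted:
  fixes A B D :: rat
  assumes "D \<noteq> 0" and "A + 500 * D^2 \<noteq> 0" and curve: "on_E (A / D^2, B / D^3)"
  shows "x_add_T (A / D^2, B / D^3) = 64 * D * (7125*A*D + 4062500*D^3 - 125*B) / (A + 500*D^2)^2 - 500"
proof -
  define M where "M = A + 500 * D^2"
  have "M \<noteq> 0" using assms(2) by (simp add: M_def)
  have cleared: "B^2 = A^3 + 2940*A^2*D^2 + 2646000*A*D^4 + 729000000*D^6"
  proof -
    have "(B / D^3)^2 * D^6 = B^2" using assms(1) by (simp add: power_divide flip: power_mult)
    moreover have "cubic_E (A / D^2) * D^6 = A^3 + 2940*A^2*D^2 + 2646000*A*D^4 + 729000000*D^6"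
      using assms(1) by (simp add: cubic_E_expand field_simps)
    ultimately show ?thesis using curve by (simp add: on_E_def)
  qed
  have "(B / D^3 - 4000) / (A / D^2 + 500) = ((B - 4000*D^3) / D^3) / (M / D^2)"
    using assms(1) by (simp add: M_def field_simps)
  also have "\<dots> = (B - 4000*D^3) / (D * M)"
    using assms(1) by (simp add: power2_eq_square power3_eq_cube)
  finally have "(B / D^3 - 4000) / (A / D^2 + 500) = (B - 4000*D^3) / (D * M)" .
  then have "x_add_T (A / D^2, B / D^3) = (B - 4000*D^3)^2 / (D^2 * M^2) - 2440 - A / D^2"
    by (simp add: x_add_T_def power_divide power_mult_distrib)
  also have "\<dots> = 64 * D * (7125*A*D + 4062500*D^3 - 125*B) / M^2 - 500"
    using assms(1) \<open>M \<noteq> 0\<close> by (simp add: field_simps) (use cleared M_def in algebra)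
  finally show ?thesis by (simp add: M_def)
qed

lemma two_adic_level_x_add_T:
  assumes "on_E p" and "two_adic_level (Suc m) p"
  shows "\<exists>Q M :: int. odd Q \<and> odd M \<and> (x_add_T p + 500) * of_int (M^2) = of_int (2^(m + 7) * Q)"
proof -
  obtain A B k :: int where odd: "odd A" "odd B" "odd k"
    and p: "p = (of_int A / of_int (2^Suc m * k)^2, of_int B / of_int (2^Suc m * k)^3)"
    using assms(2) unfolding two_adic_level_def by blast
  define D where "D = 2^Suc m * k"
  define Q where "Q = k * (7125*A*D + 4062500*D^3 - 125*B)"
  define M where "M = A + 500 * D^2"
  have "even D" by (simp add: D_def)
  then have "odd Q" "odd M" using odd by (simp_all add: Q_def M_def)
  have "of_int A + 500 * of_int D^2 = (of_int M :: rat)" by (simp add: M_def)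
  then have "of_int D \<noteq> (0::rat)" "of_int A + 500 * of_int D^2 \<noteq> (0::rat)"
    using odd \<open>odd M\<close> by (auto simp: D_def)
  moreover have pD: "p = (of_int A / of_int D ^ 2, of_int B / of_int D ^ 3)"
    by (simp only: p D_def)
  ultimately have "x_add_T p = 64 * of_int D * (7125 * of_int A * of_int D + 4062500 * of_int D^3
      - 125 * of_int B) / (of_int A + 500 * of_int D^2)^2 - 500"
    using x_add_T_weighted assms(1) by (simp only: pD)
  also have "\<dots> = of_int (2^(m + 7) * Q) / of_int (M^2) - 500"
    by (simp add: Q_def M_def D_def power_add)
  finally have "(x_add_T p + 500) * of_int (M^2) = of_int (2^(m + 7) * Q)"
    using \<open>odd M\<close> by (auto simp: divide_eq_eq simp del: of_int_mult of_int_power)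
  with \<open>odd Q\<close> \<open>odd M\<close> show ?thesis by blast
qed

lemma pow2_mult_odd_eq_imp_eq:
  fixes X Y :: int
  assumes "2^i * X = 2^j * Y" and "odd X" and "odd Y"
  shows "i = j"
proof (rule ccontr)
  assume "i \<noteq> j"
  then consider "i < j" | "j < i" by linarith
  then show False
  proof cases
    case 1
    then have "(2::int)^j = 2^i * 2^(j - i)" by (simp flip: power_add)
    then have "X = 2^(j - i) * Y" using assms(1) by simp
    then show False using assms(2) 1 by simp
  next
    case 2
    then have "(2::int)^i = 2^j * 2^(i - j)" by (simp flip: power_add)
    then have "Y = 2^(i - j) * X" using assms(1) by simp
    then show False using assms(3) 2 by simp
  qed
qed

definition left_end :: "nat \<Rightarrow> rat" where
  "left_end n = - x_add_T (doublings (Suc n)) / 20"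

lemma left_end_form:
  "\<exists>Q M :: int. odd Q \<and> odd M \<and> (500 - 20 * left_end n) * of_int (M^2) = of_int (2^(n + 7) * Q)"
proof -
  have "on_E (doublings (Suc n))" "two_adic_level (Suc n) (doublings (Suc n))"
    using doublings_on_E_level by blast+
  from two_adic_level_x_add_T[OF this] show ?thesis by (simp add: left_end_def add.commute)
qed

lemma inj_left_end: "inj left_end"
proof (rule injI)
  fix n m
  assume eq: "left_end n = left_end m"
  obtain Q M where "odd Q" "odd M" and n: "(500 - 20 * left_end n) * of_int (M^2) = of_int (2^(n + 7) * Q)"
    using left_end_form by blast
  obtain Q' M' where "odd Q'" "odd M'" and m: "(500 - 20 * left_end n) * of_int (M'^2) = of_int (2^(m + 7) * Q')"
    using left_end_form eq by metis
  have "of_int (2^(n + 7) * (Q * M'^2)) = of_int (2^(n + 7) * Q) * (of_int (M'^2) :: rat)"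
    by (simp only: of_int_mult mult.assoc)
  also have "\<dots> = (500 - 20 * left_end n) * of_int (M'^2) * of_int (M^2)"
    unfolding n[symmetric] by (simp only: ac_simps)
  also have "\<dots> = of_int (2^(m + 7) * (Q' * M^2))"
    by (simp only: m of_int_mult mult.assoc)
  finally have "2^(n + 7) * (Q * M'^2) = 2^(m + 7) * (Q' * M^2)" by (simp only: of_int_eq_iff)
  then have "n + 7 = m + 7"
    by (rule pow2_mult_odd_eq_imp_eq) (use \<open>odd Q\<close> \<open>odd M\<close> \<open>odd Q'\<close> \<open>odd M'\<close> in auto)
  then show "n = m" by simp
qed

lemma left_end_ne_27: "left_end n \<noteq> 27"
proof
  obtain Q M where "odd Q" "odd M" and n: "(500 - 20 * left_end n) * of_int (M^2) = of_int (2^(n + 7) * Q)"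
    using left_end_form by blast
  assume "left_end n = 27"
  with n have "of_int (2^3 * (- 5 * M^2)) = (of_int (2^(n + 7) * Q) :: rat)" by simp
  then have "2^3 * (- 5 * M^2) = 2^(n + 7) * Q" by (simp only: of_int_eq_iff)
  then have "3 = n + 7"
    by (rule pow2_mult_odd_eq_imp_eq) (use \<open>odd Q\<close> \<open>odd M\<close> in auto)
  then show False by simp
qed

lemma x_add_T_dbl_E_plus_root:
  assumes "on_E p" and "snd p \<noteq> 0" and "snd (dbl_E p) \<noteq> 0" and "fst (dbl_E p) \<noteq> -500"
    and e: "e \<in> {540, 900, 1500}"
  shows "\<exists>q. x_add_T (dbl_E p) + e = (e - 500) * q^2"
proof -
  obtain r where r: "fst (dbl_E p) + e = r^2"
    using fst_dbl_E_plus_root_square[OF assms(1,2) e] by blast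
  moreover have "r \<noteq> 0"
    using r fst_plus_root_nonzero[OF on_E_dbl_E[OF assms(1,2)] assms(3) e] by auto
  ultimately show ?thesis using x_add_T_plus_root[OF on_E_dbl_E[OF assms(1,2)] assms(4) e] by blast
qed

lemma left_end_square_classes:
  "\<exists>u v w. 27 - left_end n = 2 * u^2 \<and> 45 - left_end n = 5 * w^2 \<and> 75 - left_end n = 2 * v^2"
proof -
  let ?p = "doublings n"
  have "on_E ?p" "two_adic_level n ?p" "two_adic_level (Suc n) (dbl_E ?p)"
    using doublings_on_E_level[of n] doublings_on_E_level[of "Suc n"] by simp_all
  then have "on_E ?p" "snd ?p \<noteq> 0" "snd (dbl_E ?p) \<noteq> 0" "fst (dbl_E ?p) \<noteq> -500"
    by (simp_all add: two_adic_level_snd_nonzero two_adic_level_fst_ne)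
  note classes = x_add_T_dbl_E_plus_root[OF this]
  obtain q1 where q1: "x_add_T (dbl_E ?p) + 540 = 40 * q1^2" using classes[of 540] by auto
  obtain q2 where q2: "x_add_T (dbl_E ?p) + 900 = 400 * q2^2" using classes[of 900] by auto
  obtain q3 where q3: "x_add_T (dbl_E ?p) + 1500 = 1000 * q3^2" using classes[of 1500] by auto
  have "27 - left_end n = 2 * q1^2" using q1 by (simp add: left_end_def field_simps)
  moreover have "45 - left_end n = 5 * (2 * q2)^2" using q2 by (simp add: left_end_def field_simps)
  moreover have "75 - left_end n = 2 * (5 * q3)^2" using q3 by (simp add: left_end_def field_simps)
  ultimately show ?thesis by blast
qed

lemma left_end_lt_27: "left_end n < 27"
proof -
  obtain u where "27 - left_end n = 2 * u^2" using left_end_square_classes by blast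
  moreover have "0 \<le> 2 * u^2" by simp
  ultimately show ?thesis using left_end_ne_27[of n] by linarith
qed

lemma on_circle_diameter:
  "on_circle ((R + L) / 2) ((R - L) / 2) (x, y) \<longleftrightarrow> y^2 = (R - x) * (x - L)"
proof -
  have "((R - L) / 2)^2 - (x - (R + L) / 2)^2 = (R - x) * (x - L)"
    by (simp add: field_simps power2_eq_square)
  then show ?thesis unfolding on_circle_def by auto
qed

lemma circle_through_27_45_75_125:
  fixes L u v w :: rat
  assumes "27 - L = 2 * u^2" and "45 - L = 5 * w^2" and "75 - L = 2 * v^2" and "u \<noteq> 0"
    and h: "h = (125 + L) / 2" and a: "a = (125 - L) / 2"
  shows "a > 0 \<and> (\<exists>x y :: nat \<Rightarrow> rat.
    (\<forall>i\<in>{1..4}. on_circle h a (x i, y i)) \<and>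
    (\<forall>i\<in>{1..3}. x (i + 1) = 5 / 3 * x i) \<and>
    x 4 = h + a \<and> y 4 = 0 \<and> y 1 \<noteq> 0)"
proof -
  define x :: "nat \<Rightarrow> rat" where "x i = 27 * (5 / 3)^(i - 1)" for i
  define y :: "nat \<Rightarrow> rat" where
    "y i = (if i = 1 then 14 * u else if i = 2 then 20 * w else if i = 3 then 10 * v else 0)" for i
  have "on_circle h a (x i, y i)" if "i \<in> {1..4}" for i
  proof -
    from that have "i = 1 \<or> i = 2 \<or> i = 3 \<or> i = 4" by auto
    then show ?thesis unfolding h a on_circle_diameter x_def y_def
      using assms(1-3) by (auto simp: power2_eq_square power3_eq_cube)
  qed
  moreover have "x (i + 1) = 5 / 3 * x i" if "i \<in> {1..3}" for i
    using that by (cases i) (auto simp: x_def)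
  moreover have "x 4 = h + a" by (simp add: h a x_def field_simps)
  moreover have "y 4 = 0" "y 1 \<noteq> 0" using assms(4) by (simp_all add: y_def)
  moreover have "a > 0"
  proof -
    have "0 \<le> 2 * u^2" by simp
    then have "L \<le> 27" using assms(1) by linarith
    then show ?thesis by (simp add: a)
  qed
  ultimately show ?thesis by blast
qed

lemma diameter_ratio_inj:
  fixes L L' :: rat
  assumes "L < 125" and "L' < 125"
    and "((125 + L) / 2) / ((125 - L) / 2) = ((125 + L') / 2) / ((125 - L') / 2)"
  shows "L = L'"
  using assms by (auto simp: frac_eq_eq algebra_simps)

definition circles :: "(rat \<times> rat) set" where
  "circles = range (\<lambda>n. ((125 + left_end n) / 2, (125 - left_end n) / 2))"

lemma infinite_circles: "infinite circles"
proof -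
  have "inj (\<lambda>n. ((125 + left_end n) / 2, (125 - left_end n) / 2))"
    using inj_left_end by (simp add: inj_def)
  then show ?thesis
    unfolding circles_def using finite_imageD infinite_UNIV_nat by blast
qed

lemma inj_on_ratio_circles: "inj_on (\<lambda>(h, a). h / a) circles"
proof (rule inj_onI)
  fix c c' assume "c \<in> circles" "c' \<in> circles" and eq: "(\<lambda>(h, a). h / a) c = (\<lambda>(h, a). h / a) c'"
  then obtain n m where c: "c = ((125 + left_end n) / 2, (125 - left_end n) / 2)"
    and c': "c' = ((125 + left_end m) / 2, (125 - left_end m) / 2)"
    unfolding circles_def by blast
  have "left_end n < 125" "left_end m < 125"
    using left_end_lt_27[of n] left_end_lt_27[of m] by linarith+
  moreover have "((125 + left_end n) / 2) / ((125 - left_end n) / 2)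
      = ((125 + left_end m) / 2) / ((125 - left_end m) / 2)"
    using eq by (simp only: c c' prod.case)
  ultimately have "left_end n = left_end m" by (rule diameter_ratio_inj)
  then show "c = c'" by (simp only: c c')
qed

lemma circles_carry_points:
  assumes "(h, a) \<in> circles"
  shows "a > 0 \<and> (\<exists>x y :: nat \<Rightarrow> rat.
    (\<forall>i\<in>{1..4}. on_circle h a (x i, y i)) \<and>
    (\<forall>i\<in>{1..3}. x (i + 1) = 5 / 3 * x i) \<and>
    x 4 = h + a \<and> y 4 = 0 \<and> y 1 \<noteq> 0)"
proof -
  obtain n where h: "h = (125 + left_end n) / 2" and a: "a = (125 - left_end n) / 2"
    using assms unfolding circles_def by blast
  obtain u v w where uvw: "27 - left_end n = 2 * u^2" "45 - left_end n = 5 * w^2"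
      "75 - left_end n = 2 * v^2"
    using left_end_square_classes by blast
  moreover have "u \<noteq> 0" using uvw(1) left_end_ne_27[of n] by auto
  ultimately show ?thesis using h a by (rule circle_through_27_45_75_125)
qed

theorem mainTheorem3:
  shows "\<exists>S :: (rat \<times> rat) set.
    infinite S \<and>
    inj_on (\<lambda>(h, a). h / a) S \<and>
    (\<forall>(h, a) \<in> S. a > 0 \<and>
      (\<exists>x y :: nat \<Rightarrow> rat.
         (\<forall>i\<in>{1..4}. on_circle h a (x i, y i)) \<and>
         (\<forall>i\<in>{1..3}. x (i + 1) = 5 / 3 * x i) \<and>
         x 4 = h + a \<and> y 4 = 0 \<and>
         y 1 \<noteq> 0))"
  using infinite_circles inj_on_ratio_circles circles_carry_points
  by (intro exI[of _ circles]) auto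

end
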